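(* Let $E$ be a Euclidean space. For closed subsets $V_1,\dots,V_s$ and $W$ of $E$, \[\tau(W\cap V_1\cap\dots\cap V_s)\geqslant\min_{I\subseteq\{1,\dots,s\}}\tau\Big(W\cap\bigcap_{i\in I}\partial V_i\Big).\]
   Context: For nonempty $A\subseteq E$, $d_A(x)=\inf_{a\in A}\|x-a\|$, and $d_\varnothing=+\infty$. For nonempty closed $A$, the medial axis is the closure of $\Delta_A=\{x\in E:\exists a\neq b\in A,\ \|x-a\|=\|x-b\|=d_A(x)\}$, $\tau(A,p)=d_{\Delta_A}(p)$ for $p\in A$, and the reach is $\tau(A)=\inf_{p\in A}\tau(A,p)$; $\tau(\varnothing)=+\infty$. $\partial V_i$ is the topological boundary of $V_i$; the term for $I=\varnothing$ is $\tau(W)$. *)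

theory Defs
  imports "HOL-Analysis.Analysis"
begin

text \<open>d_A(x) for nonempty A is infdist x A. The set Delta_A of points with at least
two distinct nearest points in A.\<close>
definition medial_pts :: "'a::euclidean_space set \<Rightarrow> 'a set" where
  "medial_pts A = {x. \<exists>a b. a \<in> A \<and> b \<in> A \<and> a \<noteq> b \<and>
      dist x a = infdist x A \<and> dist x b = infdist x A}"

definition medial_axis :: "'a::euclidean_space set \<Rightarrow> 'a set" where
  "medial_axis A = closure (medial_pts A)"

definition local_reach :: "'a::euclidean_space set \<Rightarrow> 'a \<Rightarrow> ereal" where
  "local_reach A p = (if medial_axis A = {} then \<infinity> else ereal (infdist p (medial_axis A)))"

text \<open>Reach: infimum over A of the local reach; the empty set has reach +infinity
(INF over the empty set in ereal is top).\<close>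
definition reach :: "'a::euclidean_space set \<Rightarrow> ereal" where
  "reach A = (INF p\<in>A. local_reach A p)"

end

theory Submission imports Defs begin

text \<open>
By induction on s it suffices to show min (reach A) (reach (A \<inter> frontier B)) \<le> reach (A \<inter> B)
for closed A and B, and for this it suffices to bound infdist x (A \<inter> B) from below at every
medial point x of A \<inter> B. Such an x has nearest points a \<noteq> b in A \<inter> B at some distance r;
suppose r < reach A. If a were interior to B, then a would also be a nearest point of x in A:
move the centre of a ball touching a from a towards x. While its radius stays below
reach A, the point a is the unique nearest point of A to the centre, so by compactness the
ball can grow a little further without meeting A far from a, and near a the set A agrees with
A \<inter> B. Then x would be a medial point of A at distance r < reach A. Hence a, b lie on the
frontier of B, and x is a medial point of A \<inter> frontier B at distance r.
\<close>

lemma infdist_geI: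
  assumes "A \<noteq> {}" "\<And>a. a \<in> A \<Longrightarrow> m \<le> dist x a"
  shows "m \<le> infdist x A"
  using assms by (simp add: infdist_notempty cINF_greatest)

lemma reach_le_dist_two_nearest:
  assumes "a \<in> A" "b \<in> A" "a \<noteq> b" "dist x a = r" "dist x b = r"
    and "\<And>q. q \<in> A \<Longrightarrow> r \<le> dist x q"
  shows "reach A \<le> ereal r"
proof -
  have "r \<le> infdist x A" using assms(1,6) by (intro infdist_geI) blast+
  hence "infdist x A = r" using infdist_le[OF \<open>a \<in> A\<close>, of x] \<open>dist x a = r\<close> by simp
  hence "x \<in> medial_pts A" using assms(1-5) unfolding medial_pts_def by auto
  hence x_medial: "x \<in> medial_axis A" unfolding medial_axis_def using closure_subset by blast
  have "reach A \<le> local_reach A a" unfolding reach_def using \<open>a \<in> A\<close> by (rule INF_lower)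
  also have "\<dots> = ereal (infdist a (medial_axis A))"
    using x_medial unfolding local_reach_def by (simp add: ex_in_conv[symmetric]) blast
  also have "\<dots> \<le> ereal r"
    using infdist_le[OF x_medial, of a] \<open>dist x a = r\<close> by (simp add: dist_commute)
  finally show ?thesis .
qed

lemma reach_ge_if_medial_pts_far:
  assumes "\<And>x. x \<in> medial_pts C \<Longrightarrow> m \<le> ereal (infdist x C)"
  shows "m \<le> reach C"
  unfolding reach_def
proof (rule INF_greatest)
  fix p assume "p \<in> C"
  have far: "m \<le> ereal (dist p x)" if "x \<in> medial_pts C" for x
    using assms[OF that] infdist_le[OF \<open>p \<in> C\<close>, of x]
    by (metis dist_commute ereal_less_eq(3) order_trans)
  show "m \<le> local_reach C p"
  proof (cases "medial_axis C = {}")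
    case True then show ?thesis by (simp add: local_reach_def)
  next
    case False
    then obtain x where x: "x \<in> medial_pts C" unfolding medial_axis_def by auto
    show ?thesis
    proof (cases m)
      case (real \<mu>)
      have "medial_axis C \<subseteq> {z. \<mu> \<le> dist p z}"
        unfolding medial_axis_def using far real
        by (intro closure_minimal closed_Collect_le continuous_intros) auto
      hence "\<mu> \<le> infdist p (medial_axis C)" using False by (intro infdist_geI) auto
      thus ?thesis using False real by (simp add: local_reach_def)
    next
      case PInf then show ?thesis using far[OF x] by simp
    next
      case MInf then show ?thesis by simp
    qed
  qed
qed

lemma dist_along_segment:
  fixes a x :: "'a::real_normed_vector"
  shows "dist (a + t *\<^sub>R (x - a)) (a + s *\<^sub>R (x - a)) = \<bar>t - s\<bar> * dist x a"
proof -
  have "(a + t *\<^sub>R (x - a)) - (a + s *\<^sub>R (x - a)) = (t - s) *\<^sub>R (x - a)"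
    by (simp add: algebra_simps)
  thus ?thesis by (simp add: dist_norm)
qed

lemma unique_nearest_gap:
  fixes A :: "'a::heine_borel set"
  assumes "closed A" "e > 0"
    and nearest: "\<And>q. q \<in> A \<Longrightarrow> \<rho> \<le> dist z q"
    and unique: "\<And>q. q \<in> A \<Longrightarrow> dist z q = \<rho> \<Longrightarrow> q = a"
  obtains d where "d > 0" "\<And>q. q \<in> A - ball a e \<Longrightarrow> \<rho> + d \<le> dist z q"
proof (cases "A - ball a e = {}")
  case True then show ?thesis by (intro that[of 1]) auto
next
  case False
  have "closed (A - ball a e)" using \<open>closed A\<close> by auto
  then obtain q0 where q0: "q0 \<in> A - ball a e" "infdist z (A - ball a e) = dist z q0"
    using infdist_attains_inf False by blast
  have "\<rho> < dist z q0"
    using nearest[of q0] unique[of q0] q0(1) \<open>e > 0\<close> by force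
  moreover have "dist z q0 \<le> dist z q" if "q \<in> A - ball a e" for q
    using q0(2) infdist_le[OF that, of z] by simp
  ultimately show ?thesis using that[of "dist z q0 - \<rho>"] by force
qed

text \<open>Since dist (y t) a = t * r, the hypothesis nearest_T says that a is a nearest point of A to y T.\<close>
lemma nearest_extends_along_segment:
  fixes A B :: "'a::euclidean_space set" and a x :: 'a
  defines "y t \<equiv> a + t *\<^sub>R (x - a)"
  assumes "closed A" "a \<in> A" "e > 0" "ball a e \<subseteq> B"
    and far_in_B: "\<And>c. c \<in> A \<inter> B \<Longrightarrow> r \<le> dist x c" and "dist x a = r"
    and "ereal r < reach A" and "0 \<le> T" "T < 1"
    and nearest_T: "\<And>q. q \<in> A \<Longrightarrow> T * r \<le> dist (y T) q"
  shows "\<exists>t\<in>{T<..1}. \<forall>q\<in>A. t * r \<le> dist (y t) q"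
proof -
  have dist_y: "dist (y t) (y s) = \<bar>t - s\<bar> * r" for t s
    unfolding y_def dist_along_segment \<open>dist x a = r\<close> ..
  have y0: "y 0 = a" and y1: "y 1 = x" by (simp_all add: y_def)
  have "0 \<le> r" using \<open>dist x a = r\<close> by auto
  have "dist (y T) a = T * r" using dist_y[of T 0] y0 \<open>0 \<le> T\<close> by simp
  have unique: "q = a" if "q \<in> A" "dist (y T) q = T * r" for q
  proof (rule ccontr)
    assume "q \<noteq> a"
    have "reach A \<le> ereal (T * r)"
      using reach_le_dist_two_nearest \<open>a \<in> A\<close> \<open>q \<in> A\<close> \<open>q \<noteq> a\<close> \<open>dist (y T) a = T * r\<close>
        that(2) nearest_T by metis
    moreover have "T * r \<le> r"
      using \<open>0 \<le> T\<close> \<open>T < 1\<close> \<open>0 \<le> r\<close> by (simp add: mult_left_le_one_le)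
    ultimately have "reach A \<le> ereal r" by (meson ereal_less_eq(3) order_trans)
    thus False using \<open>ereal r < reach A\<close> by simp
  qed
  obtain d where "d > 0" and gap: "\<And>q. q \<in> A - ball a e \<Longrightarrow> T * r + d \<le> dist (y T) q"
    using unique_nearest_gap[OF \<open>closed A\<close> \<open>e > 0\<close> nearest_T unique] by blast
  define t where "t = min 1 (T + d / (2 * r + 1))"
  have "T < t" "t \<le> 1" using \<open>T < 1\<close> \<open>d > 0\<close> \<open>0 \<le> r\<close> by (auto simp: t_def)
  have "(t - T) * r \<le> d / (2 * r + 1) * r" using \<open>0 \<le> r\<close> by (intro mult_right_mono) (auto simp: t_def)
  also have "\<dots> \<le> d / 2" using \<open>d > 0\<close> \<open>0 \<le> r\<close> by (simp add: field_simps)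
  finally have step_small: "dist (y T) (y t) \<le> d / 2"
    using dist_y[of T t] \<open>T < t\<close> by simp
  have "t * r \<le> dist (y t) q" if "q \<in> A" for q
  proof (cases "q \<in> ball a e")
    case True
    hence "r \<le> dist x q" using far_in_B \<open>q \<in> A\<close> \<open>ball a e \<subseteq> B\<close> by auto
    moreover have "dist x q \<le> dist x (y t) + dist (y t) q" by (rule dist_triangle)
    moreover have "dist x (y t) = (1 - t) * r" using dist_y[of 1 t] y1 \<open>t \<le> 1\<close> by simp
    ultimately show ?thesis by (simp add: algebra_simps)
  next
    case False
    have "dist (y T) q \<le> dist (y T) (y t) + dist (y t) q" by (rule dist_triangle)
    moreover have "t * r \<le> T * r + d / 2"
      using dist_y[of t T] step_small \<open>T < t\<close> by (simp add: dist_commute algebra_simps)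
    ultimately show ?thesis using gap[of q] \<open>q \<in> A\<close> False step_small by simp
  qed
  thus ?thesis using \<open>T < t\<close> \<open>t \<le> 1\<close> by (intro bexI[of _ t]) auto
qed

lemma nearest_in_interior_is_nearest:
  fixes A B :: "'a::euclidean_space set"
  assumes "closed A" "a \<in> A" "a \<in> interior B"
    and far_in_B: "\<And>c. c \<in> A \<inter> B \<Longrightarrow> r \<le> dist x c" and "dist x a = r"
    and "ereal r < reach A"
  shows "\<forall>q\<in>A. r \<le> dist x q"
proof -
  define y where "y t = a + t *\<^sub>R (x - a)" for t
  define S where "S = {t\<in>{0..1}. \<forall>q\<in>A. t * r \<le> dist (y t) q}"
  obtain e where "e > 0" "ball a e \<subseteq> B" using \<open>a \<in> interior B\<close> mem_interior by blast
  have "S = {0..1} \<inter> (\<Inter>q\<in>A. {t. t * r \<le> dist (y t) q})" unfolding S_def by auto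
  moreover have "closed {t. t * r \<le> dist (y t) q}" for q
    unfolding y_def by (intro closed_Collect_le continuous_intros)
  ultimately have "closed S" by auto
  have "0 \<in> S" unfolding S_def y_def by simp
  have "bdd_above S" unfolding S_def by (rule bdd_aboveI[of _ 1]) auto
  have "Sup S \<in> S" using closed_contains_Sup[OF _ \<open>bdd_above S\<close> \<open>closed S\<close>] \<open>0 \<in> S\<close> by auto
  have "Sup S = 1"
  proof (rule ccontr)
    assume "Sup S \<noteq> 1"
    then obtain t where "t \<in> {Sup S<..1}" "\<forall>q\<in>A. t * r \<le> dist (y t) q"
      using nearest_extends_along_segment[OF \<open>closed A\<close> \<open>a \<in> A\<close> \<open>e > 0\<close> \<open>ball a e \<subseteq> B\<close>
          far_in_B \<open>dist x a = r\<close> \<open>ereal r < reach A\<close>, of "Sup S"] \<open>Sup S \<in> S\<close>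
      unfolding S_def y_def by fastforce
    hence "t \<in> S" "Sup S < t" using \<open>Sup S \<in> S\<close> unfolding S_def by auto
    thus False using cSup_upper[OF _ \<open>bdd_above S\<close>] by fastforce
  qed
  thus ?thesis using \<open>Sup S \<in> S\<close> unfolding S_def y_def by auto
qed

lemma two_nearest_in_frontier:
  fixes A B :: "'a::euclidean_space set"
  assumes "closed A" "a \<in> A \<inter> B" "b \<in> A" "a \<noteq> b"
    and far_in_B: "\<And>c. c \<in> A \<inter> B \<Longrightarrow> r \<le> dist x c" and "dist x a = r" "dist x b = r"
    and "ereal r < reach A"
  shows "a \<in> frontier B"
proof (rule ccontr)
  assume "a \<notin> frontier B"
  hence "a \<in> interior B" using \<open>a \<in> A \<inter> B\<close> closure_subset unfolding frontier_def by blast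
  hence "\<forall>q\<in>A. r \<le> dist x q"
    using nearest_in_interior_is_nearest \<open>closed A\<close> \<open>a \<in> A \<inter> B\<close> far_in_B \<open>dist x a = r\<close>
      \<open>ereal r < reach A\<close> by blast
  hence "reach A \<le> ereal r" using reach_le_dist_two_nearest assms by blast
  thus False using \<open>ereal r < reach A\<close> by simp
qed

lemma reach_inter_ge_min_frontier:
  fixes A B :: "'a::euclidean_space set"
  assumes "closed A" "closed B"
  shows "min (reach A) (reach (A \<inter> frontier B)) \<le> reach (A \<inter> B)"
proof (rule reach_ge_if_medial_pts_far, rule ccontr)
  fix x assume "x \<in> medial_pts (A \<inter> B)"
  define r where "r = infdist x (A \<inter> B)"
  assume "\<not> min (reach A) (reach (A \<inter> frontier B)) \<le> ereal r"
  hence "ereal r < reach A" "ereal r < reach (A \<inter> frontier B)" by (auto simp: not_le)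
  obtain a b where ab: "a \<in> A \<inter> B" "b \<in> A \<inter> B" "a \<noteq> b" "dist x a = r" "dist x b = r"
    using \<open>x \<in> medial_pts (A \<inter> B)\<close> unfolding medial_pts_def r_def by auto
  have far_in_B: "r \<le> dist x c" if "c \<in> A \<inter> B" for c
    unfolding r_def using that by (rule infdist_le)
  have "a \<in> frontier B" "b \<in> frontier B"
    using two_nearest_in_frontier[OF \<open>closed A\<close> _ _ _ far_in_B] ab \<open>ereal r < reach A\<close> by auto
  moreover have "A \<inter> frontier B \<subseteq> A \<inter> B" using \<open>closed B\<close> frontier_subset_closed by auto
  ultimately have "reach (A \<inter> frontier B) \<le> ereal r"
    using ab far_in_B by (intro reach_le_dist_two_nearest[of a _ b]) auto
  thus False using \<open>ereal r < reach (A \<inter> frontier B)\<close> by simp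
qed

lemma reach_Inter_ge_Min_frontiers:
  fixes V :: "'i \<Rightarrow> 'a::euclidean_space set"
  assumes "finite S" "\<And>i. i \<in> S \<Longrightarrow> closed (V i)" "closed W"
  shows "Min ((\<lambda>I. reach (W \<inter> (\<Inter>i\<in>I. frontier (V i)))) ` Pow S) \<le> reach (W \<inter> (\<Inter>i\<in>S. V i))"
  using assms
proof (induction S arbitrary: W rule: finite_induct)
  case empty
  then show ?case by simp
next
  case (insert j S)
  define f where "f W' I = reach (W' \<inter> (\<Inter>i\<in>I. frontier (V i)))" for W' I
  define A where "A = W \<inter> (\<Inter>i\<in>S. V i)"
  have "closed A" "closed (V j)" unfolding A_def using insert by auto
  have fin: "finite (f W ` Pow (insert j S))" using insert by auto
  have "Min (f W ` Pow (insert j S)) \<le> Min (f W ` Pow S)"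
    using fin by (intro Min_antimono) (auto simp: Pow_mono subset_insertI image_mono)
  also have "\<dots> \<le> reach A" unfolding f_def A_def using insert by auto
  finally have le_A: "Min (f W ` Pow (insert j S)) \<le> reach A" .
  have "f (W \<inter> frontier (V j)) I = f W (insert j I)" for I
    unfolding f_def by (simp add: Int_assoc Int_left_commute)
  hence "f (W \<inter> frontier (V j)) ` Pow S \<subseteq> f W ` Pow (insert j S)" by auto
  hence "Min (f W ` Pow (insert j S)) \<le> Min (f (W \<inter> frontier (V j)) ` Pow S)"
    using fin by (intro Min_antimono) auto
  also have "\<dots> \<le> reach (W \<inter> frontier (V j) \<inter> (\<Inter>i\<in>S. V i))"
    unfolding f_def using insert by (intro insert.IH) auto
  also have "W \<inter> frontier (V j) \<inter> (\<Inter>i\<in>S. V i) = A \<inter> frontier (V j)" unfolding A_def by auto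
  finally have "Min (f W ` Pow (insert j S)) \<le> min (reach A) (reach (A \<inter> frontier (V j)))"
    using le_A by simp
  also have "\<dots> \<le> reach (A \<inter> V j)" by (rule reach_inter_ge_min_frontier) fact+
  also have "A \<inter> V j = W \<inter> (\<Inter>i\<in>insert j S. V i)" unfolding A_def by auto
  finally show ?case unfolding f_def .
qed

theorem corollary2p6:
  fixes V :: "nat \<Rightarrow> 'a::euclidean_space set" and W :: "'a set" and s :: nat
  assumes "\<And>i. i \<in> {1..s} \<Longrightarrow> closed (V i)"
    and "closed W"
  shows "reach (W \<inter> (\<Inter>i\<in>{1..s}. V i))
           \<ge> Min ((\<lambda>I. reach (W \<inter> (\<Inter>i\<in>I. frontier (V i)))) ` Pow {1..s})"
  using reach_Inter_ge_Min_frontiers[of "{1..s}" V W] assms by simp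

end
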